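(* For $j=1,2$ let $a_j\in\mathbb D$, $a_j'=|1+a_j|-1$, $\gamma_{a_j}=\arg(1+\overline{a_j})$, $0\le\gamma_j<2\pi$, and let $f_j=h_j+\overline{g_j}\in\mathcal S(H^{a_j}_{\gamma_j})$ with $h_j(z)+e^{-2i(\gamma_j+\gamma_{a_j})}g_j(z)=\frac{(1+a_j')z}{1-e^{i(\gamma_j+\gamma_{a_j})}z}$ and dilatations $$\omega_{f_1}(z)=e^{2i(\gamma_1+\gamma_{a_1})}\frac{a_1'-ze^{i(\gamma_1+\gamma_{a_1})}}{1-a_1'ze^{i(\gamma_1+\gamma_{a_1})}},\qquad \omega_{f_2}(z)=e^{2i(\gamma_2+\gamma_{a_2})}\frac{a_2'+ze^{i\theta}}{1+a_2'ze^{i\theta}},$$ where $\theta\in\mathbb R$. Suppose one of the following holds: (1) $\cos(\theta-\gamma_2-\gamma_{a_2})=-1$ and $1+3a_1'+3a_2'+a_1'a_2'\ge0$; (2) $\cos(\theta-\gamma_2-\gamma_{a_2})=1$ and $1+3a_1'+3a_1'a_2'+(a_1')^2a_2'>0$. Then $f_1*f_2$ is univalent and convex in the direction $-\Gamma$, where $\Gamma=\gamma_1+\gamma_2+\gamma_{a_1}+\gamma_{a_2}$.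
   Context: $\mathbb D$ is the open unit disk. Harmonic $f=h+\overline g$ on $\mathbb D$ ($h,g$ analytic, $g(0)=0$), dilatation $\omega_f=g'/h'$; $\mathcal H$: those with $h(0)=g(0)=0$, $h'(0)=1$; $\mathcal S_H$: sense-preserving ($|h'|>|g'|$) univalent members of $\mathcal H$. $H^a_\gamma=\{w:\mathrm{Re}(\frac{e^{i\gamma}}{1+a}w)>-\frac12\}$, $\mathcal S(H^a_\gamma)=\{f\in\mathcal S_H:f(\mathbb D)=H^a_\gamma\}$. Harmonic convolution: $f*F=\sum a_nA_nz^n+\sum\overline{b_nB_n}\,\overline z^n$ for $f=\sum a_nz^n+\sum\overline{b_n}\,\overline z^n$, $F=\sum A_nz^n+\sum\overline{B_n}\,\overline z^n$. A univalent map $f$ is convex in the direction $\alpha$ (modulo $\pi$) if each line parallel to the line through $0$ and $e^{i\alpha}$ meets $f(\mathbb D)$ in an interval or the empty set. *)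

theory Defs
  imports "HOL-Analysis.Analysis"
begin

definition unit_disk :: "complex set" where
  "unit_disk = ball 0 1"

definition taylor_coeff :: "(complex \<Rightarrow> complex) \<Rightarrow> nat \<Rightarrow> complex" where
  "taylor_coeff h n = (deriv ^^ n) h 0 / fact n"

definition hadamard :: "(complex \<Rightarrow> complex) \<Rightarrow> (complex \<Rightarrow> complex) \<Rightarrow> complex \<Rightarrow> complex" where
  "hadamard h H z = (\<Sum>n. taylor_coeff h n * taylor_coeff H n * z ^ n)"

definition harm_conv :: "(complex \<Rightarrow> complex) \<Rightarrow> (complex \<Rightarrow> complex) \<Rightarrow>
    (complex \<Rightarrow> complex) \<Rightarrow> (complex \<Rightarrow> complex) \<Rightarrow> complex \<Rightarrow> complex" where
  "harm_conv h g H G = (\<lambda>z. hadamard h H z + cnj (hadamard g G z))"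

definition class_SH :: "(complex \<Rightarrow> complex) \<Rightarrow> (complex \<Rightarrow> complex) \<Rightarrow> bool" where
  "class_SH h g \<longleftrightarrow> h holomorphic_on unit_disk \<and> g holomorphic_on unit_disk \<and>
     h 0 = 0 \<and> g 0 = 0 \<and> deriv h 0 = 1 \<and>
     (\<forall>z\<in>unit_disk. cmod (deriv g z) < cmod (deriv h z)) \<and>
     inj_on (\<lambda>z. h z + cnj (g z)) unit_disk"

definition half_plane :: "complex \<Rightarrow> real \<Rightarrow> complex set" where
  "half_plane a \<gamma> = {w. Re (cis \<gamma> / (1 + a) * w) > - 1/2}"

definition class_S_half :: "complex \<Rightarrow> real \<Rightarrow> (complex \<Rightarrow> complex) \<Rightarrow> (complex \<Rightarrow> complex) \<Rightarrow> bool" where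
  "class_S_half a \<gamma> h g \<longleftrightarrow> class_SH h g \<and>
     (\<lambda>z. h z + cnj (g z)) ` unit_disk = half_plane a \<gamma>"

definition convex_in_direction :: "(complex \<Rightarrow> complex) \<Rightarrow> real \<Rightarrow> bool" where
  "convex_in_direction F \<alpha> \<longleftrightarrow>
     (\<forall>w. convex (F ` unit_disk \<inter> {w + complex_of_real t * cis \<alpha> | t. True}))"

definition aprime :: "complex \<Rightarrow> real" where
  "aprime a = cmod (1 + a) - 1"

definition gam :: "complex \<Rightarrow> real" where
  "gam a = Arg (1 + cnj a)"

end

theory Submission
  imports Defs "HOL-Complex_Analysis.Complex_Analysis"
begin

text \<open>Both factors are explicit: the relation \<open>h + e\<^sup>-\<^sup>2 g = (1 + a) z / (1 - e z)\<close> together with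
  the dilatation determines \<open>h'\<close>, so in the rotated variable \<open>u = e z\<close> the coefficients of \<open>h\<close>
  and \<open>g\<close> are combinations of those of \<open>u / (1 - u)\<close>, \<open>u / (1 - u)\<^sup>2\<close> and \<open>artanh u\<close>. Hence
  so are the coefficients of the convolution, and in the half-plane variable
  \<open>w = (1 + u) / (1 - u)\<close> the convolution becomes, up to the rotation \<open>e\<^sup>-\<^sup>i\<^sup>\<Gamma>\<close>, the shear
  \<open>Re S(w) + i Im P(w)\<close> of explicit functions \<open>S\<close> and \<open>P\<close>. Since \<open>Re P' > 0\<close>, \<open>P\<close> is univalent
  (Noshiro-Warschawski) and maps every vertical line across all horizontal lines; the
  hypotheses of the two cases are exactly what makes \<open>Re (S' / P') > 0\<close>. Then \<open>Re S\<close> increases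
  strictly along every level set of \<open>Im P\<close>, which gives univalence and horizontal convexity
  of the shear, i.e. convexity in the direction \<open>-\<Gamma>\<close> of the convolution.\<close>

section \<open>Power series\<close>

lemma sums_power_nonzero_index:
  assumes "norm (u::complex) < 1"
  shows "(\<lambda>n. of_bool (n \<noteq> 0) * u^n) sums (u / (1 - u))"
proof -
  have "(\<lambda>n. u * u^n) sums (u * (1 / (1 - u)))"
    using geometric_sums[OF assms] by (rule sums_mult)
  then have "(\<lambda>n. of_bool (Suc n \<noteq> 0) * u^Suc n) sums (u / (1 - u))" by simp
  then show ?thesis by (subst (asm) sums_Suc_iff) simp
qed

lemma sums_index_times_power:
  assumes "norm (u::complex) < 1"
  shows "(\<lambda>n. of_nat n * u^n) sums (u / (1 - u)^2)"
proof -
  have "(\<lambda>n. u * (of_nat (Suc n) * u^n)) sums (u * (1 / (1 - u)^2))"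
    using geometric_deriv_sums[OF assms] by (rule sums_mult)
  then have "(\<lambda>n. of_nat (Suc n) * u^Suc n) sums (u / (1 - u)^2)" by (simp add: algebra_simps)
  then show ?thesis by (subst (asm) sums_Suc_iff) simp
qed

lemma has_field_derivative_koebe:
  assumes "norm (u::complex) < 1"
  shows "((\<lambda>u. u / (1 - u)^2) has_field_derivative (1 + u) / (1 - u)^3) (at u)"
proof -
  have "1 - u \<noteq> 0" using assms by auto
  then show ?thesis
    by (auto intro!: derivative_eq_intros simp: divide_simps) algebra
qed

lemma sums_index_squared_times_power:
  assumes "norm (u::complex) < 1"
  shows "(\<lambda>n. of_nat n ^ 2 * u^n) sums (u * (1 + u) / (1 - u)^3)"
proof -
  have "(\<lambda>n. diffs of_nat n * u^n) sums ((1 + u) / (1 - u)^3)"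
    by (rule termdiffs_sums_strong[OF sums_index_times_power has_field_derivative_koebe[OF assms] assms])
  then have "(\<lambda>n. u * (of_nat (Suc n) ^ 2 * u^n)) sums (u * ((1 + u) / (1 - u)^3))"
    by (intro sums_mult) (simp add: diffs_def power2_eq_square)
  then have "(\<lambda>n. of_nat (Suc n) ^ 2 * u^Suc n) sums (u * (1 + u) / (1 - u)^3)"
    by (simp add: algebra_simps)
  then show ?thesis by (subst (asm) sums_Suc_iff) simp
qed

lemma sums_odd_powers:
  assumes "norm (u::complex) < 1"
  shows "(\<lambda>n. of_bool (odd n) * u^n) sums (u / (1 - u^2))"
proof -
  have "norm (-u) < 1" using assms by simp
  then have sums: "(\<lambda>n. (u^n - (-u)^n) / 2) sums ((1 / (1 - u) - 1 / (1 - (-u))) / 2)"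
    by (intro sums_divide sums_diff geometric_sums assms)
  have terms: "(\<lambda>n. (u^n - (-u)^n) / 2) = (\<lambda>n. of_bool (odd n) * u^n)"
    by (auto simp: fun_eq_iff)
  have "1 - u \<noteq> 0" "1 + u \<noteq> 0"
    using assms by (auto simp: add_eq_0_iff)
  then have limit: "(1 / (1 - u) - 1 / (1 - (-u))) / 2 = u / (1 - u^2)"
    by (simp add: divide_simps) algebra
  show ?thesis using sums unfolding terms limit .
qed

definition Artanh :: "complex \<Rightarrow> complex" where
  "Artanh u = (Ln (1 + u) - Ln (1 - u)) / 2"

lemma sums_Artanh:
  assumes "norm (u::complex) < 1"
  shows "(\<lambda>n. of_bool (odd n) / of_nat n * u^n) sums Artanh u"
proof -
  have "norm (-u) < 1" using assms by simp
  then have "(\<lambda>n. (- ((-u)^n) / of_nat n - - ((- (-u))^n) / of_nat n) / 2)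
      sums ((Ln (1 + u) - Ln (1 + (-u))) / 2)"
    by (intro sums_divide sums_diff Ln_series' assms)
  moreover have "(\<lambda>n. (- ((-u)^n) / of_nat n - - ((- (-u))^n) / of_nat n) / 2)
      = (\<lambda>n. of_bool (odd n) / of_nat n * u^n)"
    by (auto simp: fun_eq_iff)
  ultimately show ?thesis by (simp add: Artanh_def)
qed

lemma has_field_derivative_Artanh:
  assumes "norm (u::complex) < 1"
  shows "(Artanh has_field_derivative 1 / (1 - u^2)) (at u)"
proof -
  have pos: "Re (1 + u) > 0" "Re (1 - u) > 0"
    using abs_Re_le_cmod[of u] assms by auto
  then have "1 + u \<notin> \<real>\<^sub>\<le>\<^sub>0" "1 - u \<notin> \<real>\<^sub>\<le>\<^sub>0" "1 + u \<noteq> 0" "1 - u \<noteq> 0"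
    by (auto simp: complex_nonpos_Reals_iff complex_eq_iff)
  moreover from this have "u^2 \<noteq> 1"
    by (auto simp: power2_eq_1_iff add_eq_0_iff)
  ultimately show ?thesis
    unfolding Artanh_def
    by (auto intro!: derivative_eq_intros simp: divide_simps) algebra
qed

section \<open>The coefficients of the two factors\<close>

lemma taylor_coeff_eqI:
  assumes "\<forall>u\<in>ball 0 1. (\<lambda>n. c n * u^n) sums f u"
  shows "taylor_coeff f n = c n"
proof -
  have "eventually (\<lambda>u. (\<lambda>n. fps_nth (Abs_fps c) n * u^n) sums f u) (nhds 0)"
    unfolding eventually_nhds using assms by (intro exI[of _ "ball 0 1"]) auto
  then have "f has_fps_expansion Abs_fps c" by (rule has_fps_expansionI)
  from fps_nth_fps_expansion[OF this, of n] show ?thesis by (simp add: taylor_coeff_def)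
qed

lemma eq_on_ball_if_same_deriv:
  fixes f g :: "complex \<Rightarrow> complex"
  assumes "\<forall>z\<in>ball 0 1. (f has_field_derivative D z) (at z)"
    and "\<forall>z\<in>ball 0 1. (g has_field_derivative D z) (at z)"
    and "f 0 = g 0" and "z \<in> ball 0 1"
  shows "f z = g z"
proof -
  have "\<exists>c. \<forall>x\<in>ball 0 1. f x - g x = c"
  proof (rule has_field_derivative_zero_constant)
    fix x assume "x \<in> ball (0::complex) 1"
    then have "((\<lambda>x. f x - g x) has_field_derivative D x - D x) (at x)"
      using assms by (intro DERIV_diff) auto
    then show "((\<lambda>x. f x - g x) has_field_derivative 0) (at x within ball 0 1)"
      by (simp add: has_field_derivative_at_within)
  qed simp
  then obtain c where c: "\<forall>x\<in>ball 0 1. f x - g x = c" by blast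
  from c[rule_format, of 0] c[rule_format, OF assms(4)] assms(3) show ?thesis by simp
qed

lemma deriv_of_linear_relation:
  assumes "h holomorphic_on ball 0 1" and "g holomorphic_on ball 0 1"
    and "\<forall>z\<in>ball 0 1. h z + c * g z = R z"
    and "(R has_field_derivative R') (at z)" and z: "z \<in> ball 0 1"
  shows "deriv h z + c * deriv g z = R'"
proof -
  have "(g has_field_derivative deriv g z) (at z)"
    using assms(2) z by (meson holomorphic_derivI open_ball)
  then have "((\<lambda>z. R z - c * g z) has_field_derivative R' - c * deriv g z) (at z)"
    by (intro DERIV_diff DERIV_cmult assms(4))
  then have "(h has_field_derivative R' - c * deriv g z) (at z)"
    by (rule has_field_derivative_transform_within_open[where S="ball 0 1"])
      (use z assms(3) in \<open>auto simp: algebra_simps\<close>)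
  then show ?thesis by (simp add: DERIV_imp_deriv)
qed

text \<open>The sign \<open>\<sigma> = -1\<close> covers \<open>f\<^sub>1\<close> and, in case (1), \<open>f\<^sub>2\<close>; \<open>\<sigma> = 1\<close> covers \<open>f\<^sub>2\<close> in case (2).\<close>
definition analytic_deriv :: "real \<Rightarrow> real \<Rightarrow> complex \<Rightarrow> complex" where
  "analytic_deriv \<sigma> a u = (1 + of_real (\<sigma> * a) * u) / ((1 + of_real \<sigma> * u) * (1 - u)^2)"

lemma deriv_analytic_part:
  fixes a \<sigma> :: real and e z :: complex
  assumes e: "norm e = 1" and a: "\<bar>a\<bar> < 1" and \<sigma>: "\<bar>\<sigma>\<bar> = 1"
    and h: "h holomorphic_on ball 0 1" and g: "g holomorphic_on ball 0 1"
    and dh: "\<forall>z\<in>ball 0 1. deriv h z \<noteq> 0"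
    and s: "\<forall>z\<in>ball 0 1. h z + (cnj e)^2 * g z = (1 + of_real a) * z / (1 - e * z)"
    and w: "\<forall>z\<in>ball 0 1. deriv g z / deriv h z
              = e^2 * ((of_real a + of_real \<sigma> * z * e) / (1 + of_real (\<sigma> * a) * z * e))"
    and z: "z \<in> ball 0 1"
  shows "deriv h z = analytic_deriv \<sigma> a (e * z)"
proof -
  define u where "u = e * z"
  have u: "norm u < 1" using e z by (simp add: u_def norm_mult)
  have "\<bar>a\<bar> * norm u < 1"
    using mult_strict_mono'[of "\<bar>a\<bar>" 1 "norm u" 1] u a by simp
  then have "norm (of_real \<sigma> * u) < 1" "norm (of_real (\<sigma> * a) * u) < 1"
    using u \<sigma> by (simp_all add: norm_mult abs_mult)
  then have nz: "1 - u \<noteq> 0" "1 + of_real \<sigma> * u \<noteq> 0" "1 + of_real (\<sigma> * a) * u \<noteq> 0"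
    using u by (auto simp: add_eq_0_iff)
  have "1 + of_real a \<noteq> (0::complex)"
    using a by (auto simp: complex_eq_iff)
  have "((\<lambda>z. (1 + of_real a) * z / (1 - e * z)) has_field_derivative (1 + of_real a) / (1 - u)^2) (at z)"
    using nz(1) unfolding u_def by (auto intro!: derivative_eq_intros simp: divide_simps) algebra
  from deriv_of_linear_relation[OF h g s this z]
  have "deriv h z + (cnj e)^2 * (e^2 * ((of_real a + of_real \<sigma> * u) / (1 + of_real (\<sigma> * a) * u)) * deriv h z)
      = (1 + of_real a) / (1 - u)^2"
    using w dh z by (simp add: u_def divide_eq_eq mult.commute mult.left_commute)
  moreover have "(cnj e)^2 * e^2 = 1"
    using e by (metis complex_norm_square mult.commute of_real_1 power_mult_distrib power_one)
  ultimately have "deriv h z * ((1 + of_real \<sigma> * u) * (1 - u)^2) * (1 + of_real a)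
      = (1 + of_real (\<sigma> * a) * u) * (1 + of_real a)"
    using nz by (simp add: field_simps)
  then have "deriv h z * ((1 + of_real \<sigma> * u) * (1 - u)^2) = 1 + of_real (\<sigma> * a) * u"
    using \<open>1 + of_real a \<noteq> 0\<close> by simp
  with nz show ?thesis
    unfolding analytic_deriv_def u_def[symmetric] by (simp add: eq_divide_eq)
qed

definition koebe_mix :: "real \<Rightarrow> complex \<Rightarrow> complex" where
  "koebe_mix a u = of_real ((1 - a) / 2) * (u / (1 - u)^2) + of_real ((1 + a) / 2) * (u / (1 - u))"

definition koebe_mix_coeff :: "real \<Rightarrow> nat \<Rightarrow> real" where
  "koebe_mix_coeff a n = ((1 - a) * n + (1 + a) * of_bool (n \<noteq> 0)) / 2"

definition artanh_mix :: "real \<Rightarrow> complex \<Rightarrow> complex" where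
  "artanh_mix a u = of_real ((1 + a) / 2) * (u / (1 - u)) + of_real ((1 - a) / 2) * Artanh u"

definition artanh_mix_coeff :: "real \<Rightarrow> nat \<Rightarrow> real" where
  "artanh_mix_coeff a n = ((1 + a) * of_bool (n \<noteq> 0) + (1 - a) * of_bool (odd n) / n) / 2"

lemma sums_koebe_mix:
  assumes "norm u < 1"
  shows "(\<lambda>n. of_real (koebe_mix_coeff a n) * u^n) sums koebe_mix a u"
proof -
  have "(\<lambda>n. of_real ((1 - a) / 2) * (of_nat n * u^n) + of_real ((1 + a) / 2) * (of_bool (n \<noteq> 0) * u^n))
      sums koebe_mix a u"
    unfolding koebe_mix_def
    by (intro sums_add sums_mult sums_index_times_power sums_power_nonzero_index assms)
  moreover have "(\<lambda>n. of_real ((1 - a) / 2) * (of_nat n * u^n) + of_real ((1 + a) / 2) * (of_bool (n \<noteq> 0) * u^n))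
      = (\<lambda>n. of_real (koebe_mix_coeff a n) * u^n)"
    by (rule ext) (simp add: koebe_mix_coeff_def of_bool_def field_simps)
  ultimately show ?thesis by simp
qed

lemma sums_artanh_mix:
  assumes "norm u < 1"
  shows "(\<lambda>n. of_real (artanh_mix_coeff a n) * u^n) sums artanh_mix a u"
proof -
  have "(\<lambda>n. of_real ((1 + a) / 2) * (of_bool (n \<noteq> 0) * u^n)
      + of_real ((1 - a) / 2) * (of_bool (odd n) / of_nat n * u^n)) sums artanh_mix a u"
    unfolding artanh_mix_def
    by (intro sums_add sums_mult sums_Artanh sums_power_nonzero_index assms)
  moreover have "(\<lambda>n. of_real ((1 + a) / 2) * (of_bool (n \<noteq> 0) * u^n)
      + of_real ((1 - a) / 2) * (of_bool (odd n) / of_nat n * u^n))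
      = (\<lambda>n. of_real (artanh_mix_coeff a n) * u^n)"
    by (rule ext) (simp add: artanh_mix_coeff_def of_bool_def field_simps)
  ultimately show ?thesis by simp
qed

lemma has_field_derivative_geometric_shift:
  assumes "norm (u::complex) < 1"
  shows "((\<lambda>u. u / (1 - u)) has_field_derivative 1 / (1 - u)^2) (at u)"
proof -
  have "1 - u \<noteq> 0" using assms by auto
  then show ?thesis
    by (auto intro!: derivative_eq_intros simp: divide_simps) algebra
qed

lemma has_field_derivative_koebe_mix:
  assumes "norm u < 1"
  shows "(koebe_mix a has_field_derivative analytic_deriv (-1) a u) (at u)"
proof -
  have "(koebe_mix a has_field_derivative
      of_real ((1 - a) / 2) * ((1 + u) / (1 - u)^3) + of_real ((1 + a) / 2) * (1 / (1 - u)^2)) (at u)"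
    unfolding koebe_mix_def[abs_def]
    by (intro DERIV_add DERIV_cmult has_field_derivative_koebe has_field_derivative_geometric_shift assms)
  moreover have "1 - u \<noteq> 0" using assms by auto
  then have "of_real ((1 - a) / 2) * ((1 + u) / (1 - u)^3) + of_real ((1 + a) / 2) * (1 / (1 - u)^2)
      = analytic_deriv (-1) a u"
    unfolding analytic_deriv_def by (simp add: divide_simps) algebra
  ultimately show ?thesis by simp
qed

lemma has_field_derivative_artanh_mix:
  assumes "norm u < 1"
  shows "(artanh_mix a has_field_derivative analytic_deriv 1 a u) (at u)"
proof -
  have "(artanh_mix a has_field_derivative
      of_real ((1 + a) / 2) * (1 / (1 - u)^2) + of_real ((1 - a) / 2) * (1 / (1 - u^2))) (at u)"
    unfolding artanh_mix_def[abs_def]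
    by (intro DERIV_add DERIV_cmult has_field_derivative_Artanh has_field_derivative_geometric_shift assms)
  moreover have "1 - u \<noteq> 0" "1 + u \<noteq> 0" using assms by (auto simp: add_eq_0_iff)
  then have "of_real ((1 + a) / 2) * (1 / (1 - u)^2) + of_real ((1 - a) / 2) * (1 / ((1 - u) * (1 + u)))
      = analytic_deriv 1 a u"
    unfolding analytic_deriv_def by (simp add: divide_simps) algebra
  moreover have "1 - u^2 = (1 - u) * (1 + u)" by algebra
  ultimately show ?thesis by simp
qed

lemma analytic_part_sums:
  assumes e: "norm e = 1" and h: "h holomorphic_on ball 0 1" and "h 0 = 0" and "K 0 = 0"
    and dK: "\<And>u. norm u < 1 \<Longrightarrow> (K has_field_derivative D u) (at u)"
    and dh: "\<forall>z\<in>ball 0 1. deriv h z = D (e * z)"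
    and K: "\<And>u. norm u < 1 \<Longrightarrow> (\<lambda>n. of_real (c n) * u^n) sums K u"
    and z: "z \<in> ball 0 1"
  shows "(\<lambda>n. (cnj e * of_real (c n) * e^n) * z^n) sums h z"
proof -
  have ez: "norm (e * z) < 1" if "z \<in> ball 0 1" for z
    using e that by (simp add: norm_mult)
  have "cnj e * e = 1"
    using e by (metis complex_norm_square mult.commute of_real_1 power_one)
  have "h z = cnj e * K (e * z)"
  proof (rule eq_on_ball_if_same_deriv[OF _ _ _ z])
    show "\<forall>z\<in>ball 0 1. (h has_field_derivative D (e * z)) (at z)"
      using dh h by (metis holomorphic_derivI open_ball)
    show "\<forall>z\<in>ball 0 1. ((\<lambda>z. cnj e * K (e * z)) has_field_derivative D (e * z)) (at z)"
    proof
      fix z :: complex assume "z \<in> ball 0 1"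
      have "((\<lambda>z. e * z) has_field_derivative e) (at z)"
        by (auto intro!: derivative_eq_intros)
      from DERIV_chain2[OF dK[OF ez[OF \<open>z \<in> ball 0 1\<close>]] this]
      have "((\<lambda>z. cnj e * K (e * z)) has_field_derivative cnj e * (D (e * z) * e)) (at z)"
        by (intro DERIV_cmult) simp
      moreover have "cnj e * (D (e * z) * e) = D (e * z)"
        using \<open>cnj e * e = 1\<close> by (simp add: ac_simps)
      ultimately show "((\<lambda>z. cnj e * K (e * z)) has_field_derivative D (e * z)) (at z)"
        by simp
    qed
  qed (use assms in simp)
  moreover have "(\<lambda>n. cnj e * (of_real (c n) * (e * z)^n)) sums (cnj e * K (e * z))"
    by (intro sums_mult K ez z)
  ultimately show ?thesis by (simp add: power_mult_distrib ac_simps)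
qed

text \<open>The relation \<open>h + e\<^sup>-\<^sup>2 g = (1 + a) z / (1 - e z)\<close> determines the co-analytic
  coefficients from the analytic ones.\<close>
definition coanalytic_coeff :: "real \<Rightarrow> (nat \<Rightarrow> real) \<Rightarrow> nat \<Rightarrow> real" where
  "coanalytic_coeff a c n = (1 + a) * of_bool (n \<noteq> 0) - c n"

lemma coanalytic_part_sums:
  assumes e: "norm e = 1" and z: "z \<in> ball 0 1"
    and hs: "(\<lambda>n. (cnj e * of_real (c n) * e^n) * z^n) sums h z"
    and s: "h z + (cnj e)^2 * g z = (1 + of_real a) * z / (1 - e * z)"
  shows "(\<lambda>n. (e * of_real (coanalytic_coeff a c n) * e^n) * z^n) sums g z"
proof -
  define R where "R = (1 + of_real a) * z / (1 - e * z)"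
  have ce: "cnj e * e = 1"
    using e by (metis complex_norm_square mult.commute of_real_1 power_one)
  have "e^2 * cnj e = e * (cnj e * e)"
    by (simp only: power2_eq_square ac_simps)
  then have e2ce: "e^2 * cnj e = e" using ce by simp
  have ez: "norm (e * z) < 1" using e z by (simp add: norm_mult)
  have "g z = (e^2 * cnj e) * cnj e * g z"
    using ce by (simp add: power2_eq_square ac_simps)
  also have "\<dots> = e^2 * ((cnj e)^2 * g z)"
    by (simp only: power2_eq_square ac_simps)
  also have "(cnj e)^2 * g z = R - h z"
    using s by (simp add: R_def eq_diff_eq add.commute)
  finally have g: "g z = e^2 * (R - h z)" .
  have "(\<lambda>n. e^2 * (cnj e * (1 + of_real a) * (of_bool (n \<noteq> 0) * (e * z)^n)
      - (cnj e * of_real (c n) * e^n) * z^n))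
      sums (e^2 * (cnj e * (1 + of_real a) * ((e * z) / (1 - e * z)) - h z))"
    by (intro sums_mult sums_diff hs sums_power_nonzero_index ez)
  moreover have "cnj e * (1 + of_real a) * ((e * z) / (1 - e * z)) = R"
    using ce by (simp add: R_def ac_simps)
  moreover have "e^2 * (cnj e * (1 + of_real a) * (of_bool (n \<noteq> 0) * (e * z)^n)
      - (cnj e * of_real (c n) * e^n) * z^n)
      = (e * of_real ((1 + a) * of_bool (n \<noteq> 0) - c n) * e^n) * z^n" for n
  proof -
    have "e^2 * (cnj e * (1 + of_real a) * (of_bool (n \<noteq> 0) * (e * z)^n)
        - (cnj e * of_real (c n) * e^n) * z^n)
        = (e^2 * cnj e) * (((1 + of_real a) * of_bool (n \<noteq> 0) - of_real (c n)) * e^n * z^n)"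
      by (simp add: power_mult_distrib algebra_simps)
    then show ?thesis using e2ce by (cases "n = 0") simp_all
  qed
  ultimately show ?thesis unfolding g coanalytic_coeff_def by simp
qed

lemma class_S_half_analytic_facts:
  assumes "class_S_half \<alpha> \<gamma> h g"
  shows "h holomorphic_on ball 0 1" "g holomorphic_on ball 0 1" "h 0 = 0"
    and "\<forall>z\<in>ball 0 1. deriv h z \<noteq> 0"
proof -
  have "h holomorphic_on ball 0 1 \<and> g holomorphic_on ball 0 1 \<and> h 0 = 0 \<and>
      (\<forall>z\<in>ball 0 1. cmod (deriv g z) < cmod (deriv h z))"
    using assms unfolding class_S_half_def class_SH_def unit_disk_def by blast
  then show "h holomorphic_on ball 0 1" "g holomorphic_on ball 0 1" "h 0 = 0"
    and "\<forall>z\<in>ball 0 1. deriv h z \<noteq> 0"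
    by (auto dest!: bspec)
qed

lemma abs_aprime_less_1:
  assumes "a \<in> unit_disk"
  shows "\<bar>aprime a\<bar> < 1"
proof -
  have "norm a < 1" using assms by (simp add: unit_disk_def)
  moreover have "norm (1 + a) \<le> 1 + norm a" "1 - norm a \<le> norm (1 + a)"
    using norm_triangle_ineq[of 1 a] norm_triangle_ineq2[of 1 "-a"] by simp_all
  ultimately show ?thesis by (auto simp: aprime_def)
qed

lemma taylor_coeffs_from_dilatation:
  fixes a \<sigma> p :: real and c :: "nat \<Rightarrow> real"
  assumes f: "class_S_half \<alpha> \<gamma> h g" and a: "\<bar>a\<bar> < 1" and \<sigma>: "\<bar>\<sigma>\<bar> = 1"
    and s: "\<forall>z\<in>unit_disk. h z + cis (- 2 * p) * g z = (1 + of_real a) * z / (1 - cis p * z)"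
    and w: "\<forall>z\<in>unit_disk. deriv g z / deriv h z
              = cis (2 * p) * ((of_real a + of_real \<sigma> * z * cis p) / (1 + of_real (\<sigma> * a) * z * cis p))"
    and K: "\<And>u. norm u < 1 \<Longrightarrow> (\<lambda>n. of_real (c n) * u^n) sums K u"
    and dK: "\<And>u. norm u < 1 \<Longrightarrow> (K has_field_derivative analytic_deriv \<sigma> a u) (at u)"
    and "K 0 = 0"
  shows "taylor_coeff h n = cnj (cis p) * of_real (c n) * cis p ^ n"
    and "taylor_coeff g n = cis p * of_real (coanalytic_coeff a c n) * cis p ^ n"
proof -
  note f = class_S_half_analytic_facts[OF f]
  have e: "norm (cis p) = 1" by simp
  have cis2: "cis (- 2 * p) = (cnj (cis p))^2" "cis (2 * p) = (cis p)^2"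
    by (simp_all add: Complex.DeMoivre cis_cnj)
  have s': "\<forall>z\<in>ball 0 1. h z + (cnj (cis p))^2 * g z = (1 + of_real a) * z / (1 - cis p * z)"
    using s unfolding cis2 unit_disk_def .
  have "\<forall>z\<in>ball 0 1. deriv h z = analytic_deriv \<sigma> a (cis p * z)"
    using deriv_analytic_part[OF e a \<sigma> f(1,2,4) s'] w unfolding cis2 unit_disk_def by blast
  then have hs: "\<forall>z\<in>ball 0 1. (\<lambda>n. (cnj (cis p) * of_real (c n) * cis p ^ n) * z^n) sums h z"
    using analytic_part_sums[OF e f(1,3) \<open>K 0 = 0\<close> dK _ K] by blast
  then show "taylor_coeff h n = cnj (cis p) * of_real (c n) * cis p ^ n"
    by (rule taylor_coeff_eqI)
  have "\<forall>z\<in>ball 0 1. (\<lambda>n. (cis p * of_real (coanalytic_coeff a c n) * cis p ^ n) * z^n) sums g z"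
  proof
    fix z :: complex assume "z \<in> ball 0 1"
    with hs s' show "(\<lambda>n. (cis p * of_real (coanalytic_coeff a c n) * cis p ^ n) * z^n) sums g z"
      by (intro coanalytic_part_sums[OF e]) auto
  qed
  then show "taylor_coeff g n = cis p * of_real (coanalytic_coeff a c n) * cis p ^ n"
    by (rule taylor_coeff_eqI)
qed

section \<open>The convolution in the half-plane\<close>

definition cayley :: "complex \<Rightarrow> complex" where
  "cayley u = (1 + u) / (1 - u)"

lemma cayley_rational_identities:
  assumes "norm (u::complex) < 1"
  shows "u / (1 - u) = (cayley u - 1) / 2"
    and "u / (1 - u)^2 = (cayley u ^ 2 - 1) / 4"
    and "u * (1 + u) / (1 - u)^3 = (cayley u ^ 3 - cayley u) / 4"
    and "u / (1 - u^2) = (cayley u - 1 / cayley u) / 4"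
proof -
  have nz: "1 - u \<noteq> 0" "1 + u \<noteq> 0" using assms by (auto simp: add_eq_0_iff)
  show "u / (1 - u) = (cayley u - 1) / 2" using nz by (simp add: cayley_def field_simps)
  show "u / (1 - u)^2 = (cayley u ^ 2 - 1) / 4" using nz by (simp add: cayley_def divide_simps) algebra
  show "u * (1 + u) / (1 - u)^3 = (cayley u ^ 3 - cayley u) / 4"
    using nz by (simp add: cayley_def divide_simps) algebra
  have "1 - u^2 = (1 - u) * (1 + u)" by algebra
  then show "u / (1 - u^2) = (cayley u - 1 / cayley u) / 4"
    using nz by (simp add: cayley_def divide_simps) (simp add: algebra_simps)
qed

lemma Re_cayley_pos:
  assumes "norm u < 1"
  shows "Re (cayley u) > 0"
proof -
  have "1 - u \<noteq> 0" using assms by auto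
  have "cayley u = (1 + u) * cnj (1 - u) / ((1 - u) * cnj (1 - u))"
    using \<open>1 - u \<noteq> 0\<close> by (simp add: cayley_def)
  also have "(1 - u) * cnj (1 - u) = of_real ((norm (1 - u))^2)"
    by (rule complex_norm_square[symmetric])
  finally have "cayley u = (1 + u) * cnj (1 - u) / of_real ((norm (1 - u))^2)" .
  moreover have "Re ((1 + u) * cnj (1 - u)) = 1 - (norm u)^2"
    using cmod_power2[of u] by (simp add: algebra_simps power2_eq_square)
  moreover have "(norm u)^2 < 1" using assms by (simp add: power_less_one_iff abs_square_less_1)
  ultimately show ?thesis using \<open>1 - u \<noteq> 0\<close> by (simp add: Re_divide_of_real)
qed

lemma Artanh_eq_Ln_cayley:
  assumes "norm u < 1"
  shows "Artanh u = Ln (cayley u) / 2"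
proof -
  have pos: "Re (1 + u) > 0" "Re (1 - u) > 0"
    using abs_Re_le_cmod[of u] assms by auto
  then have "1 + u \<noteq> 0" "1 - u \<noteq> 0" by (auto simp: complex_eq_iff)
  have "Ln (cayley u) = Ln (1 + u) - Ln (1 - u)"
  proof (rule Ln_unique)
    show "exp (Ln (1 + u) - Ln (1 - u)) = cayley u"
      using \<open>1 + u \<noteq> 0\<close> \<open>1 - u \<noteq> 0\<close> by (simp add: exp_diff cayley_def)
    have "\<bar>Im (Ln (1 + u))\<bar> < pi / 2" "\<bar>Im (Ln (1 - u))\<bar> < pi / 2"
      using Re_Ln_pos_lt_imp pos by auto
    then show "- pi < Im (Ln (1 + u) - Ln (1 - u))" "Im (Ln (1 + u) - Ln (1 - u)) \<le> pi"
      by auto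
  qed
  then show ?thesis by (simp add: Artanh_def)
qed

lemma bij_betw_cayley: "bij_betw cayley (ball 0 1) {w. Re w > 0}"
proof (rule bij_betw_byWitness[where f' = "\<lambda>w. (w - 1) / (w + 1)"])
  show "\<forall>u\<in>ball 0 1. (cayley u - 1) / (cayley u + 1) = u"
  proof
    fix u :: complex assume "u \<in> ball 0 1"
    then have "1 - u \<noteq> 0" by auto
    then show "(cayley u - 1) / (cayley u + 1) = u"
      by (simp add: cayley_def divide_simps)
  qed
  show "\<forall>w\<in>{w. Re w > 0}. cayley ((w - 1) / (w + 1)) = w"
  proof
    fix w :: complex assume "w \<in> {w. Re w > 0}"
    then have "w + 1 \<noteq> 0" by (auto simp: complex_eq_iff)
    then show "cayley ((w - 1) / (w + 1)) = w" by (simp add: cayley_def divide_simps)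
  qed
  show "cayley ` ball 0 1 \<subseteq> {w. Re w > 0}" using Re_cayley_pos by auto
  show "(\<lambda>w. (w - 1) / (w + 1)) ` {w. Re w > 0} \<subseteq> ball 0 1"
  proof clarify
    fix w :: complex assume w: "Re w > 0"
    then have "w + 1 \<noteq> 0" by (auto simp: complex_eq_iff)
    have "(norm (w - 1))^2 = (Re w - 1)^2 + (Im w)^2" "(norm (w + 1))^2 = (Re w + 1)^2 + (Im w)^2"
      by (simp_all add: cmod_power2)
    then have "(norm (w - 1))^2 < (norm (w + 1))^2"
      using w by (simp add: power2_eq_square algebra_simps)
    then have "norm (w - 1) < norm (w + 1)" by (simp add: power_less_imp_less_base)
    then show "(w - 1) / (w + 1) \<in> ball 0 1"
      using \<open>w + 1 \<noteq> 0\<close> by (simp add: norm_divide divide_less_eq)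
  qed
qed

text \<open>Pulled back to the half-plane variable \<open>w = cayley u\<close>, the analytic and co-analytic parts of
  the convolution become \<open>(S + P) / 2\<close> and \<open>(S - P) / 2\<close> for the following \<open>S\<close> and \<open>P\<close>, one pair for
  each case of the theorem; the convolution itself is then \<open>Re S + i Im P\<close>.\<close>
definition S_case1 :: "real \<Rightarrow> real \<Rightarrow> complex \<Rightarrow> complex" where
  "S_case1 a b w = of_real ((1 - a) * (1 - b)) * (w^3 - w) / 8 + of_real ((1 + a) * (1 + b)) * (w - 1) / 4"

definition P_case1 :: "real \<Rightarrow> real \<Rightarrow> complex \<Rightarrow> complex" where
  "P_case1 a b w = of_real ((1 - a) * (1 + b) + (1 - b) * (1 + a)) * (w^2 - 1) / 8"

definition S_case2 :: "real \<Rightarrow> real \<Rightarrow> complex \<Rightarrow> complex" where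
  "S_case2 a b w = of_real ((1 + a) * (1 + b)) * (w - 1) / 4 + of_real ((1 - a) * (1 - b)) * (w - 1 / w) / 8"

definition P_case2 :: "real \<Rightarrow> real \<Rightarrow> complex \<Rightarrow> complex" where
  "P_case2 a b w = of_real ((1 - a) * (1 + b)) * (w^2 - 1) / 8 + of_real ((1 + a) * (1 - b)) * Ln w / 4"

lemma sums_convolution_case1:
  assumes u: "norm u < 1"
  shows "(\<lambda>n. of_real (koebe_mix_coeff a n * koebe_mix_coeff b n) * u^n)
           sums ((S_case1 a b (cayley u) + P_case1 a b (cayley u)) / 2)"
    and "(\<lambda>n. of_real (coanalytic_coeff a (koebe_mix_coeff a) n * coanalytic_coeff b (koebe_mix_coeff b) n) * u^n)
           sums ((S_case1 a b (cayley u) - P_case1 a b (cayley u)) / 2)"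
proof -
  define B where "B = (1 - a) * (1 - b)"
  define s where "s = (1 - a) * (1 + b) + (1 - b) * (1 + a)"
  define bb where "bb = (1 + a) * (1 + b)"
  have sums: "(\<lambda>n. of_real ((B * real n ^ 2 + \<epsilon> * s * n + bb * of_bool (n \<noteq> 0)) / 4) * u^n)
      sums ((S_case1 a b (cayley u) + of_real \<epsilon> * P_case1 a b (cayley u)) / 2)" for \<epsilon> :: real
  proof -
    have terms: "(\<lambda>n. of_real (B / 4) * (of_nat n ^ 2 * u^n) + of_real (\<epsilon> * s / 4) * (of_nat n * u^n)
        + of_real (bb / 4) * (of_bool (n \<noteq> 0) * u^n))
        = (\<lambda>n. of_real ((B * real n ^ 2 + \<epsilon> * s * n + bb * of_bool (n \<noteq> 0)) / 4) * u^n)"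
      by (rule ext) (simp add: of_bool_def field_simps)
    have series: "(\<lambda>n. of_real (B / 4) * (of_nat n ^ 2 * u^n) + of_real (\<epsilon> * s / 4) * (of_nat n * u^n)
        + of_real (bb / 4) * (of_bool (n \<noteq> 0) * u^n))
        sums (of_real (B / 4) * (u * (1 + u) / (1 - u)^3) + of_real (\<epsilon> * s / 4) * (u / (1 - u)^2)
        + of_real (bb / 4) * (u / (1 - u)))"
      by (intro sums_add sums_mult sums_index_squared_times_power sums_index_times_power
          sums_power_nonzero_index u)
    have limit: "of_real (B / 4) * (u * (1 + u) / (1 - u)^3) + of_real (\<epsilon> * s / 4) * (u / (1 - u)^2)
        + of_real (bb / 4) * (u / (1 - u)) = (S_case1 a b (cayley u) + of_real \<epsilon> * P_case1 a b (cayley u)) / 2"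
      unfolding cayley_rational_identities[OF u] S_case1_def P_case1_def B_def s_def bb_def
      by (simp add: field_simps)
    show ?thesis using series unfolding terms limit .
  qed
  have coeffs: "koebe_mix_coeff a n * koebe_mix_coeff b n = (B * real n ^ 2 + 1 * s * n + bb * of_bool (n \<noteq> 0)) / 4"
    "coanalytic_coeff a (koebe_mix_coeff a) n * coanalytic_coeff b (koebe_mix_coeff b) n
      = (B * real n ^ 2 + (-1) * s * n + bb * of_bool (n \<noteq> 0)) / 4" for n
    by (cases "n = 0"; simp add: koebe_mix_coeff_def coanalytic_coeff_def B_def s_def bb_def
        field_simps power2_eq_square)+
  show
    "(\<lambda>n. of_real (koebe_mix_coeff a n * koebe_mix_coeff b n) * u^n)
       sums ((S_case1 a b (cayley u) + P_case1 a b (cayley u)) / 2)"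
    "(\<lambda>n. of_real (coanalytic_coeff a (koebe_mix_coeff a) n * coanalytic_coeff b (koebe_mix_coeff b) n) * u^n)
       sums ((S_case1 a b (cayley u) - P_case1 a b (cayley u)) / 2)"
    using sums[of 1] sums[of "-1"] by (simp_all add: coeffs)
qed

lemma sums_convolution_case2:
  assumes u: "norm u < 1"
  shows "(\<lambda>n. of_real (koebe_mix_coeff a n * artanh_mix_coeff b n) * u^n)
           sums ((S_case2 a b (cayley u) + P_case2 a b (cayley u)) / 2)"
    and "(\<lambda>n. of_real (coanalytic_coeff a (koebe_mix_coeff a) n * coanalytic_coeff b (artanh_mix_coeff b) n) * u^n)
           sums ((S_case2 a b (cayley u) - P_case2 a b (cayley u)) / 2)"
proof -
  define B where "B = (1 - a) * (1 - b)"
  define C where "C = (1 - a) * (1 + b)"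
  define D where "D = (1 + a) * (1 - b)"
  define bb where "bb = (1 + a) * (1 + b)"
  have sums: "(\<lambda>n. of_real ((\<epsilon> * C * n + B * of_bool (odd n) + bb * of_bool (n \<noteq> 0)
        + \<epsilon> * D * of_bool (odd n) / n) / 4) * u^n)
      sums ((S_case2 a b (cayley u) + of_real \<epsilon> * P_case2 a b (cayley u)) / 2)" for \<epsilon> :: real
  proof -
    have terms: "(\<lambda>n. of_real (\<epsilon> * C / 4) * (of_nat n * u^n) + of_real (B / 4) * (of_bool (odd n) * u^n)
        + of_real (bb / 4) * (of_bool (n \<noteq> 0) * u^n) + of_real (\<epsilon> * D / 4) * (of_bool (odd n) / of_nat n * u^n))
        = (\<lambda>n. of_real ((\<epsilon> * C * n + B * of_bool (odd n) + bb * of_bool (n \<noteq> 0)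
        + \<epsilon> * D * of_bool (odd n) / n) / 4) * u^n)"
      by (rule ext) (simp add: of_bool_def field_simps)
    have series: "(\<lambda>n. of_real (\<epsilon> * C / 4) * (of_nat n * u^n) + of_real (B / 4) * (of_bool (odd n) * u^n)
        + of_real (bb / 4) * (of_bool (n \<noteq> 0) * u^n) + of_real (\<epsilon> * D / 4) * (of_bool (odd n) / of_nat n * u^n))
        sums (of_real (\<epsilon> * C / 4) * (u / (1 - u)^2) + of_real (B / 4) * (u / (1 - u^2))
        + of_real (bb / 4) * (u / (1 - u)) + of_real (\<epsilon> * D / 4) * Artanh u)"
      by (intro sums_add sums_mult sums_index_times_power sums_odd_powers
          sums_power_nonzero_index sums_Artanh u)
    have limit: "of_real (\<epsilon> * C / 4) * (u / (1 - u)^2) + of_real (B / 4) * (u / (1 - u^2))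
        + of_real (bb / 4) * (u / (1 - u)) + of_real (\<epsilon> * D / 4) * Artanh u
        = (S_case2 a b (cayley u) + of_real \<epsilon> * P_case2 a b (cayley u)) / 2"
      unfolding cayley_rational_identities[OF u] Artanh_eq_Ln_cayley[OF u] S_case2_def P_case2_def
        B_def C_def D_def bb_def
      by (simp add: field_simps)
    show ?thesis using series unfolding terms limit .
  qed
  have coeffs: "koebe_mix_coeff a n * artanh_mix_coeff b n
      = (1 * C * n + B * of_bool (odd n) + bb * of_bool (n \<noteq> 0) + 1 * D * of_bool (odd n) / n) / 4"
    "coanalytic_coeff a (koebe_mix_coeff a) n * coanalytic_coeff b (artanh_mix_coeff b) n
      = ((-1) * C * n + B * of_bool (odd n) + bb * of_bool (n \<noteq> 0) + (-1) * D * of_bool (odd n) / n) / 4"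
    for n
    by (cases "n = 0"; cases "odd n";
        simp add: koebe_mix_coeff_def artanh_mix_coeff_def coanalytic_coeff_def B_def C_def D_def bb_def
        field_simps)+
  show
    "(\<lambda>n. of_real (koebe_mix_coeff a n * artanh_mix_coeff b n) * u^n)
       sums ((S_case2 a b (cayley u) + P_case2 a b (cayley u)) / 2)"
    "(\<lambda>n. of_real (coanalytic_coeff a (koebe_mix_coeff a) n * coanalytic_coeff b (artanh_mix_coeff b) n) * u^n)
       sums ((S_case2 a b (cayley u) - P_case2 a b (cayley u)) / 2)"
    using sums[of 1] sums[of "-1"] by (simp_all add: coeffs)
qed

section \<open>Shears\<close>

lemma has_vector_derivative_along_line:
  assumes "(f has_field_derivative D) (at (c + of_real t * d))"
  shows "((\<lambda>t. f (c + of_real t * d)) has_vector_derivative D * d) (at t)"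
proof -
  have "((\<lambda>s. c + s * d) has_field_derivative d) (at (of_real t))"
    by (auto intro!: derivative_eq_intros)
  from DERIV_chain2[OF assms this]
  have "((\<lambda>s. f (c + s * d)) has_field_derivative D * d) (at (of_real t))" by simp
  from has_vector_derivative_real_field[OF this] show ?thesis by simp
qed

lemma inj_on_if_Re_deriv_pos:
  assumes U: "convex U" and dP: "\<forall>w\<in>U. (P has_field_derivative P' w) (at w)"
    and pos: "\<forall>w\<in>U. Re (P' w) > 0"
  shows "inj_on P U"
proof (rule inj_onI, rule ccontr)
  fix w1 w2 assume w: "w1 \<in> U" "w2 \<in> U" "P w1 = P w2" "w1 \<noteq> w2"
  define d where "d = w2 - w1"
  have seg: "w1 + of_real t * d \<in> U" if "0 \<le> t" "t \<le> 1" for t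
  proof -
    have "w1 + of_real t * d = (1 - t) *\<^sub>R w1 + t *\<^sub>R w2"
      by (simp add: d_def scaleR_conv_of_real algebra_simps)
    then show ?thesis using convexD[OF U w(1) w(2), of "1 - t" t] that by simp
  qed
  define \<phi> where "\<phi> t = Re (P (w1 + of_real t * d) * cnj d)" for t
  have "\<phi> 0 < \<phi> 1"
  proof (rule DERIV_pos_imp_increasing[where f = \<phi>])
    fix t :: real assume t: "0 \<le> t" "t \<le> 1"
    define p where "p = P' (w1 + of_real t * d)"
    have "((\<lambda>t. P (w1 + of_real t * d)) has_vector_derivative p * d) (at t)"
      unfolding p_def by (rule has_vector_derivative_along_line) (use dP seg t in blast)
    then have "((\<lambda>t. P (w1 + of_real t * d) * cnj d) has_vector_derivative p * d * cnj d) (at t)"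
      by (auto intro!: derivative_eq_intros simp: has_vector_derivative_def scaleR_conv_of_real)
    then have "(\<phi> has_real_derivative Re (p * d * cnj d)) (at t)"
      unfolding \<phi>_def by (rule has_field_derivative_Re)
    moreover have "p * d * cnj d = of_real ((norm d)^2) * p"
      by (metis complex_norm_square mult.assoc mult.commute)
    moreover have "d \<noteq> 0" "Re p > 0" using w pos seg[OF t] by (auto simp: d_def p_def)
    ultimately show "\<exists>y. (\<phi> has_real_derivative y) (at t) \<and> 0 < y" by auto
  qed simp
  moreover have "\<phi> 0 = \<phi> 1" using w by (simp add: \<phi>_def d_def)
  ultimately show False by simp
qed

lemma Im_strict_mono_on_vertical_line:
  assumes dP: "\<forall>w\<in>{w. Re w > 0}. (P has_field_derivative P' w) (at w)"
    and pos: "\<forall>w\<in>{w. Re w > 0}. Re (P' w) > 0"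
    and "x > 0" "y1 < y2"
  shows "Im (P (Complex x y1)) < Im (P (Complex x y2))"
proof -
  define \<phi> where "\<phi> t = Im (P (of_real x + of_real t * \<i>))" for t
  have "\<phi> y1 < \<phi> y2"
  proof (rule DERIV_pos_imp_increasing[where f = \<phi>, OF \<open>y1 < y2\<close>])
    fix t :: real
    have w: "of_real x + of_real t * \<i> \<in> {w. Re w > 0}" using \<open>x > 0\<close> by simp
    have "((\<lambda>t. P (of_real x + of_real t * \<i>)) has_vector_derivative P' (of_real x + of_real t * \<i>) * \<i>) (at t)"
      by (rule has_vector_derivative_along_line) (use dP w in blast)
    then have "(\<phi> has_real_derivative Im (P' (of_real x + of_real t * \<i>) * \<i>)) (at t)"
      unfolding \<phi>_def by (rule has_field_derivative_Im)
    moreover have "Im (P' (of_real x + of_real t * \<i>) * \<i>) > 0" using pos w by simp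
    ultimately show "\<exists>y. (\<phi> has_real_derivative y) (at t) \<and> 0 < y" by blast
  qed
  then show ?thesis by (simp add: \<phi>_def Complex_eq mult.commute)
qed

lemma continuous_on_level_curve:
  fixes \<phi> :: "real \<Rightarrow> real \<Rightarrow> real"
  assumes "open X"
    and mono: "\<And>x y1 y2. x \<in> X \<Longrightarrow> y1 < y2 \<Longrightarrow> \<phi> x y1 < \<phi> x y2"
    and cont: "\<And>x y. x \<in> X \<Longrightarrow> isCont (\<lambda>x. \<phi> x y) x"
    and Y: "\<And>x. x \<in> X \<Longrightarrow> \<phi> x (Y x) = T"
  shows "continuous_on X Y"
proof (intro continuous_at_imp_continuous_on ballI)
  fix x0 assume x0: "x0 \<in> X"
  show "isCont Y x0" unfolding isCont_def tendsto_iff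
  proof (intro allI impI)
    fix \<epsilon> :: real assume "\<epsilon> > 0"
    define y_hi where "y_hi = Y x0 + \<epsilon> / 2"
    define y_lo where "y_lo = Y x0 - \<epsilon> / 2"
    have "T < \<phi> x0 y_hi" "\<phi> x0 y_lo < T"
      using mono[OF x0, of "Y x0" y_hi] mono[OF x0, of y_lo "Y x0"] Y[OF x0] \<open>\<epsilon> > 0\<close>
      by (simp_all add: y_hi_def y_lo_def)
    then have "eventually (\<lambda>x. T < \<phi> x y_hi) (at x0)" "eventually (\<lambda>x. \<phi> x y_lo < T) (at x0)"
      using cont[OF x0, of y_hi] cont[OF x0, of y_lo] unfolding isCont_def
      by (auto elim: order_tendstoD[rotated])
    moreover have "eventually (\<lambda>x. x \<in> X) (at x0)"
      using \<open>open X\<close> x0 by (rule eventually_at_in_open')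
    ultimately show "eventually (\<lambda>x. dist (Y x) (Y x0) < \<epsilon>) (at x0)"
    proof eventually_elim
      case (elim x)
      have "Y x < y_hi"
        using mono[of x y_hi "Y x"] Y[of x] elim by (cases "Y x" y_hi rule: linorder_cases) auto
      moreover have "y_lo < Y x"
        using mono[of x "Y x" y_lo] Y[of x] elim by (cases "Y x" y_lo rule: linorder_cases) auto
      ultimately show ?case by (simp add: y_hi_def y_lo_def dist_real_def abs_less_iff)
    qed
  qed
qed

lemma connected_level_set:
  assumes dP: "\<forall>w\<in>{w. Re w > 0}. (P has_field_derivative P' w) (at w)"
    and pos: "\<forall>w\<in>{w. Re w > 0}. Re (P' w) > 0"
    and onto: "\<forall>x>0. \<forall>T. \<exists>y. Im (P (Complex x y)) = T"
  shows "connected {w. Re w > 0 \<and> Im (P w) = T}"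
proof -
  have "\<forall>x\<in>{0<..}. \<exists>y. Im (P (Complex x y)) = T" using onto by simp
  then obtain Y where Y: "\<And>x. x \<in> {0<..} \<Longrightarrow> Im (P (Complex x (Y x))) = T"
    by (metis bchoice)
  have mono: "Im (P (Complex x y1)) < Im (P (Complex x y2))" if "x \<in> {0<..}" "y1 < y2" for x y1 y2
    using that by (intro Im_strict_mono_on_vertical_line[OF dP pos]) auto
  have "isCont (\<lambda>x. Im (P (Complex x y))) x" if "x \<in> {0<..}" for x y
  proof -
    have "isCont P (Complex x y)" using dP that DERIV_isCont by fastforce
    moreover have "isCont (\<lambda>x. Complex x y) x"
      unfolding Complex_eq by (intro continuous_intros)
    ultimately have "isCont (\<lambda>x. P (Complex x y)) x"
      by (metis isCont_o2)
    then show ?thesis unfolding isCont_def by (rule tendsto_Im)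
  qed
  from continuous_on_level_curve[where \<phi> = "\<lambda>x y. Im (P (Complex x y))", OF open_greaterThan mono this Y]
  have "continuous_on {0<..} (\<lambda>x. Complex x (Y x))"
    by (auto intro!: continuous_intros simp: Complex_eq)
  then have "connected ((\<lambda>x. Complex x (Y x)) ` {0<..})"
    by (rule connected_continuous_image) simp
  moreover have "{w. Re w > 0 \<and> Im (P w) = T} = (\<lambda>x. Complex x (Y x)) ` {0<..}"
  proof (intro equalityI subsetI)
    fix w assume w: "w \<in> {w. Re w > 0 \<and> Im (P w) = T}"
    have "Im w = Y (Re w)"
      using mono[of "Re w" "Im w" "Y (Re w)"] mono[of "Re w" "Y (Re w)" "Im w"] Y[of "Re w"] w
      by (cases "Im w" "Y (Re w)" rule: linorder_cases) auto
    with w show "w \<in> (\<lambda>x. Complex x (Y x)) ` {0<..}"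
      by (intro image_eqI[of _ _ "Re w"]) (auto simp: complex_eq_iff)
  qed (use Y in auto)
  ultimately show ?thesis by simp
qed

text \<open>Along a horizontal segment inside \<open>P(U)\<close>, the real part of \<open>S \<circ> P\<^sup>-\<^sup>1\<close> has derivative
  \<open>Re (S' / P')\<close>.\<close>
lemma Re_strict_mono_along_level_set:
  assumes "open U"
    and dP: "\<forall>w\<in>U. (P has_field_derivative P' w) (at w)"
    and dS: "\<forall>w\<in>U. (S has_field_derivative S' w) (at w)"
    and injP: "inj_on P U" and pos: "\<forall>w\<in>U. Re (S' w / P' w) > 0"
    and w: "w1 \<in> U" "w2 \<in> U" "Im (P w1) = T" "Im (P w2) = T" "Re (P w1) < Re (P w2)"
    and seg: "\<And>t. Re (P w1) \<le> t \<Longrightarrow> t \<le> Re (P w2) \<Longrightarrow> Complex t T \<in> P ` U"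
  shows "Re (S w1) < Re (S w2)"
proof -
  have holP: "P holomorphic_on U"
    using dP \<open>open U\<close> by (auto simp: holomorphic_on_open field_differentiable_def)
  obtain Q where holQ: "Q holomorphic_on P ` U"
    and dQ: "\<And>z. z \<in> U \<Longrightarrow> deriv P z * deriv Q (P z) = 1"
    and QP: "\<And>z. z \<in> U \<Longrightarrow> Q (P z) = z"
    using holomorphic_has_inverse[OF holP \<open>open U\<close> injP] by metis
  have "open (P ` U)" by (rule open_mapping_thm3[OF holP \<open>open U\<close> injP])
  define g where "g t = Re (S (Q (\<i> * of_real T + of_real t * 1)))" for t
  have "g (Re (P w1)) < g (Re (P w2))"
  proof (rule DERIV_pos_imp_increasing[OF w(5)])
    fix t assume "Re (P w1) \<le> t" "t \<le> Re (P w2)"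
    then obtain w where "w \<in> U" and Pw: "\<i> * of_real T + of_real t = P w"
      using seg by (force simp: Complex_eq ac_simps)
    have "deriv P w = P' w" using dP \<open>w \<in> U\<close> by (simp add: DERIV_imp_deriv)
    then have "P' w * deriv Q (P w) = 1" using dQ[OF \<open>w \<in> U\<close>] by simp
    moreover from this have "P' w \<noteq> 0" by auto
    ultimately have "deriv Q (P w) = 1 / P' w"
      by (simp add: eq_divide_eq mult.commute)
    then have "(Q has_field_derivative 1 / P' w) (at (P w))"
      using holQ \<open>open (P ` U)\<close> \<open>w \<in> U\<close> by (metis holomorphic_derivI imageI)
    then have "((\<lambda>z. S (Q z)) has_field_derivative S' w * (1 / P' w)) (at (P w))"
      by (rule DERIV_chain2[rotated]) (use dS QP \<open>w \<in> U\<close> in simp)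
    then have "((\<lambda>t. S (Q (\<i> * of_real T + of_real t * 1))) has_vector_derivative S' w / P' w * 1) (at t)"
      by (intro has_vector_derivative_along_line) (simp add: Pw)
    then have "(g has_real_derivative Re (S' w / P' w)) (at t)"
      unfolding g_def using has_field_derivative_Re by fastforce
    then show "\<exists>y. (g has_real_derivative y) (at t) \<and> 0 < y" using pos \<open>w \<in> U\<close> by blast
  qed
  moreover have "\<i> * of_real T + of_real (Re (P w)) * 1 = P w" if "Im (P w) = T" for w
    using that by (simp add: complex_eq_iff)
  then have "g (Re (P w1)) = Re (S w1)" "g (Re (P w2)) = Re (S w2)"
    using w QP by (simp_all add: g_def)
  ultimately show ?thesis by simp
qed

definition shear_map :: "(complex \<Rightarrow> complex) \<Rightarrow> (complex \<Rightarrow> complex) \<Rightarrow> complex \<Rightarrow> complex" where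
  "shear_map S P w = Complex (Re (S w)) (Im (P w))"

lemma convex_horizontal_image:
  assumes "convex A"
  shows "convex ((\<lambda>t. Complex t T) ` A)"
proof -
  have "(\<lambda>t. Complex t T) ` A = (+) (\<i> * of_real T) ` (of_real ` A)"
    by (auto simp: image_image Complex_eq ac_simps)
  moreover have "convex (of_real ` A :: complex set)"
    using assms by (intro convex_linear_image) (auto intro: bounded_linear.linear bounded_linear_of_real)
  ultimately show ?thesis by (simp add: convex_translation)
qed

lemma shear_map_horizontal_section:
  "shear_map S P ` {w. Re w > 0} \<inter> {z. Im z = T}
     = (\<lambda>t. Complex t T) ` ((\<lambda>w. Re (S w)) ` {w. Re w > 0 \<and> Im (P w) = T})"
proof -
  have "shear_map S P ` {w. Re w > 0} \<inter> {z. Im z = T} = shear_map S P ` {w. Re w > 0 \<and> Im (P w) = T}"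
    by (auto simp: shear_map_def)
  also have "\<dots> = (\<lambda>t. Complex t T) ` ((\<lambda>w. Re (S w)) ` {w. Re w > 0 \<and> Im (P w) = T})"
    unfolding image_image by (rule image_cong) (auto simp: shear_map_def)
  finally show ?thesis .
qed

lemma shear_map_univalent_and_convex:
  assumes dP: "\<forall>w\<in>{w. Re w > 0}. (P has_field_derivative P' w) (at w)"
    and dS: "\<forall>w\<in>{w. Re w > 0}. (S has_field_derivative S' w) (at w)"
    and pos: "\<forall>w\<in>{w. Re w > 0}. Re (P' w) > 0"
    and onto: "\<forall>x>0. \<forall>T. \<exists>y. Im (P (Complex x y)) = T"
    and ratio: "\<forall>w\<in>{w. Re w > 0}. Re (S' w / P' w) > 0"
  shows "inj_on (shear_map S P) {w. Re w > 0}"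
    and "convex (shear_map S P ` {w. Re w > 0} \<inter> {z. Im z = T})"
proof -
  define U where "U = {w::complex. Re w > 0}"
  define L where "L T = {w. Re w > 0 \<and> Im (P w) = T}" for T
  have "open U" "convex U" by (simp_all add: U_def open_halfspace_Re_gt convex_halfspace_Re_gt)
  have injP: "inj_on P U"
    using inj_on_if_Re_deriv_pos[OF \<open>convex U\<close>] dP pos by (simp add: U_def)
  have conn: "connected (L T)" for T
    unfolding L_def by (rule connected_level_set[OF dP pos onto])
  have cont: "continuous_on (L T) P" "continuous_on (L T) S" for T
    using dP dS by (auto intro!: continuous_at_imp_continuous_on DERIV_isCont simp: L_def)
  have mono: "Re (S w1) < Re (S w2)" if "w1 \<in> L T" "w2 \<in> L T" "Re (P w1) < Re (P w2)" for w1 w2 T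
  proof (rule Re_strict_mono_along_level_set[of U P P' S S' w1 w2 T])
    fix t assume "Re (P w1) \<le> t" "t \<le> Re (P w2)"
    moreover have "connected ((\<lambda>w. Re (P w)) ` L T)"
      using conn cont by (intro connected_continuous_image continuous_intros)
    ultimately have "t \<in> (\<lambda>w. Re (P w)) ` L T"
      using that connected_contains_Icc[of "(\<lambda>w. Re (P w)) ` L T" "Re (P w1)" "Re (P w2)"] by auto
    then obtain w where "w \<in> L T" "Re (P w) = t" by blast
    then show "Complex t T \<in> P ` U"
      by (intro image_eqI[of _ _ w]) (auto simp: L_def U_def complex_eq_iff)
  qed (use that \<open>open U\<close> injP dP dS ratio in \<open>auto simp: L_def U_def\<close>)
  show "inj_on (shear_map S P) {w. Re w > 0}"
  proof (rule inj_onI)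
    fix w1 w2 assume w: "w1 \<in> {w. Re w > 0}" "w2 \<in> {w. Re w > 0}" "shear_map S P w1 = shear_map S P w2"
    then have L: "w1 \<in> L (Im (P w1))" "w2 \<in> L (Im (P w1))" and "Re (S w1) = Re (S w2)"
      by (auto simp: L_def shear_map_def complex_eq_iff)
    then have "\<not> Re (P w1) < Re (P w2)" "\<not> Re (P w2) < Re (P w1)"
      using mono[OF L] mono[OF L(2,1)] by auto
    moreover have "Im (P w1) = Im (P w2)" using w(3) by (simp add: shear_map_def)
    ultimately have "P w1 = P w2" by (simp add: complex_eq_iff)
    then show "w1 = w2" using injP w(1,2) by (simp add: U_def inj_on_eq_iff)
  qed
  have "connected ((\<lambda>w. Re (S w)) ` L T)"
    using conn cont by (intro connected_continuous_image continuous_intros)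
  then have "convex ((\<lambda>w. Re (S w)) ` L T)" by (simp only: connected_convex_1)
  then show "convex (shear_map S P ` {w. Re w > 0} \<inter> {z. Im z = T})"
    unfolding shear_map_horizontal_section L_def[symmetric] by (rule convex_horizontal_image)
qed

section \<open>The two cases\<close>

lemma Re_of_real_mult: "Re (of_real r * z) = r * Re z"
  by simp

lemma Re_inverse_pos: "Re w > 0 \<Longrightarrow> Re (1 / w) > 0"
  by (simp add: Re_divide divide_pos_pos sum_power2_gt_zero_iff)

lemma Re_ratio_case1_pos:
  fixes B s bb :: real
  assumes "B > 0" "s > 0" "2 * bb - B \<ge> 0" and w: "Re w > 0"
  shows "Re ((of_real B * (3 * w^2 - 1) / 8 + of_real bb / 4) / (of_real s * w / 4)) > 0"
proof -
  have "w \<noteq> 0" using w by auto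
  then have "(of_real B * (3 * w^2 - 1) / 8 + of_real bb / 4) / (of_real s * w / 4)
      = of_real (3 * B / (2 * s)) * w + of_real ((2 * bb - B) / (2 * s)) * (1 / w)"
    using \<open>s > 0\<close> by (simp add: field_simps power2_eq_square)
  moreover have "Re (of_real (3 * B / (2 * s)) * w) > 0"
    unfolding Re_of_real_mult using w \<open>B > 0\<close> \<open>s > 0\<close> by simp
  moreover have "Re (of_real ((2 * bb - B) / (2 * s)) * (1 / w)) \<ge> 0"
    unfolding Re_of_real_mult using Re_inverse_pos[OF w] \<open>2 * bb - B \<ge> 0\<close> \<open>s > 0\<close> by simp
  ultimately show ?thesis by simp
qed

lemma shear_map_univalent_and_convex_case1:
  fixes a b :: real
  assumes a: "\<bar>a\<bar> < 1" and b: "\<bar>b\<bar> < 1" and c: "1 + 3 * a + 3 * b + a * b \<ge> 0"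
  shows "inj_on (shear_map (S_case1 a b) (P_case1 a b)) {w. Re w > 0}"
    and "convex (shear_map (S_case1 a b) (P_case1 a b) ` {w. Re w > 0} \<inter> {z. Im z = T})"
proof -
  define s where "s = (1 - a) * (1 + b) + (1 - b) * (1 + a)"
  define B where "B = (1 - a) * (1 - b)"
  define bb where "bb = (1 + a) * (1 + b)"
  have "\<bar>a * b\<bar> < 1"
    using mult_strict_mono'[of "\<bar>a\<bar>" 1 "\<bar>b\<bar>" 1] a b by (simp add: abs_mult)
  then have s: "s > 0" by (simp add: s_def algebra_simps abs_less_iff)
  have "B > 0" using a b by (simp add: B_def)
  have "2 * bb - B \<ge> 0" using c by (simp add: B_def bb_def algebra_simps)
  define S' where "S' w = of_real B * (3 * w^2 - 1) / 8 + of_real bb / 4" for w :: complex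
  define P' where "P' w = of_real s * w / 4" for w :: complex
  have "\<forall>w\<in>{w. Re w > 0}. (P_case1 a b has_field_derivative P' w) (at w)"
    unfolding P_case1_def P'_def s_def[symmetric]
    by (auto intro!: derivative_eq_intros simp: power2_eq_square algebra_simps)
  moreover have "\<forall>w\<in>{w. Re w > 0}. (S_case1 a b has_field_derivative S' w) (at w)"
    unfolding S_case1_def S'_def B_def[symmetric] bb_def[symmetric]
    by (auto intro!: derivative_eq_intros simp: power2_eq_square field_simps)
  moreover have "\<forall>w\<in>{w. Re w > 0}. Re (P' w) > 0" using s by (simp add: P'_def)
  moreover have "\<forall>x>0. \<forall>T. \<exists>y. Im (P_case1 a b (Complex x y)) = T"
  proof (intro allI impI)
    fix x T :: real assume "x > 0"
    have "Im (P_case1 a b (Complex x y)) = s * x * y / 4" for y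
      unfolding P_case1_def s_def[symmetric] by (simp add: power2_eq_square)
    then have "Im (P_case1 a b (Complex x (4 * T / (s * x)))) = s * x * (4 * T / (s * x)) / 4" .
    then have "Im (P_case1 a b (Complex x (4 * T / (s * x)))) = T"
      using \<open>x > 0\<close> s by simp
    then show "\<exists>y. Im (P_case1 a b (Complex x y)) = T" by blast
  qed
  moreover have "\<forall>w\<in>{w. Re w > 0}. Re (S' w / P' w) > 0"
    using Re_ratio_case1_pos[OF \<open>B > 0\<close> s \<open>2 * bb - B \<ge> 0\<close>] by (simp add: S'_def P'_def)
  ultimately show "inj_on (shear_map (S_case1 a b) (P_case1 a b)) {w. Re w > 0}"
    and "convex (shear_map (S_case1 a b) (P_case1 a b) ` {w. Re w > 0} \<inter> {z. Im z = T})"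
    by (rule shear_map_univalent_and_convex)+
qed

lemma has_field_derivative_P_case2:
  assumes "Re w > 0"
  shows "(P_case2 a b has_field_derivative
           of_real ((1 - a) * (1 + b)) * w / 4 + of_real ((1 + a) * (1 - b)) / (4 * w)) (at w)"
proof -
  have "w \<notin> \<real>\<^sub>\<le>\<^sub>0" "w \<noteq> 0" using assms by (auto simp: complex_nonpos_Reals_iff)
  then show ?thesis
    unfolding P_case2_def[abs_def]
    by (auto intro!: derivative_eq_intros simp: field_simps power2_eq_square)
qed

lemma has_field_derivative_S_case2:
  assumes "Re w > 0"
  shows "(S_case2 a b has_field_derivative
           of_real ((1 + a) * (1 + b)) / 4 + of_real ((1 - a) * (1 - b)) * (1 + 1 / w^2) / 8) (at w)"
proof -
  have "w \<noteq> 0" using assms by auto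
  then show ?thesis
    unfolding S_case2_def[abs_def]
    by (auto intro!: derivative_eq_intros simp: field_simps power2_eq_square)
qed

lemma Im_P_case2_surjective:
  assumes a: "\<bar>a\<bar> < 1" and b: "\<bar>b\<bar> < 1" and "x > 0"
  shows "\<exists>y. Im (P_case2 a b (Complex x y)) = T"
proof -
  define C where "C = (1 - a) * (1 + b)"
  define D where "D = (1 + a) * (1 - b)"
  have "C > 0" "D > 0" using a b by (auto simp: C_def D_def)
  define f where "f y = Im (P_case2 a b (Complex x y))" for y
  have f: "f y = C * x * y / 4 + D * Im (Ln (Complex x y)) / 4" for y
    by (simp add: f_def P_case2_def C_def D_def power2_eq_square)
  have Ln: "\<bar>Im (Ln (Complex x y))\<bar> < pi / 2" for y
    using Re_Ln_pos_lt_imp[of "Complex x y"] \<open>x > 0\<close> by simp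
  define y_lo where "y_lo = (4 * T - D * pi) / (C * x)"
  define y_hi where "y_hi = (4 * T + D * pi) / (C * x)"
  have "C * x * y_lo / 4 = T - D * pi / 4" "C * x * y_hi / 4 = T + D * pi / 4"
    using \<open>C > 0\<close> \<open>x > 0\<close> by (simp_all add: y_lo_def y_hi_def field_simps)
  moreover have bound: "\<bar>D * Im (Ln (Complex x y))\<bar> \<le> D * (pi / 2)" for y
    using Ln[of y] \<open>D > 0\<close> by (simp add: abs_mult)
  have "D * Im (Ln (Complex x y_lo)) \<le> D * (pi / 2)" "- (D * (pi / 2)) \<le> D * Im (Ln (Complex x y_hi))"
    using bound[of y_lo] bound[of y_hi] unfolding abs_le_iff by linarith+
  moreover have "D * pi > 0" using \<open>D > 0\<close> by simp
  ultimately have "f y_lo \<le> T" "T \<le> f y_hi"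
    unfolding f by linarith+
  moreover have "y_lo \<le> y_hi"
    using \<open>C > 0\<close> \<open>D > 0\<close> \<open>x > 0\<close> by (simp add: y_lo_def y_hi_def divide_right_mono)
  moreover have "continuous_on {y_lo..y_hi} f"
  proof (intro continuous_at_imp_continuous_on ballI)
    fix y
    have "Re (of_real x + of_real y * \<i>) > 0" using \<open>x > 0\<close> by simp
    then obtain D' where "((\<lambda>t. P_case2 a b (of_real x + of_real t * \<i>)) has_vector_derivative D') (at y)"
      using has_vector_derivative_along_line[OF has_field_derivative_P_case2] by blast
    moreover have "Complex x t = of_real x + of_real t * \<i>" for t
      by (simp add: complex_eq_iff)
    then have "f = (\<lambda>t. Im (P_case2 a b (of_real x + of_real t * \<i>)))"
      by (simp add: fun_eq_iff f_def)
    ultimately have "(f has_real_derivative Im D') (at y)"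
      by (simp add: has_field_derivative_Im)
    then show "isCont f y" by (rule DERIV_isCont)
  qed
  ultimately obtain y where "f y = T" using IVT'[of f y_lo T y_hi] by blast
  then show ?thesis unfolding f_def by blast
qed

text \<open>The partial fraction decomposition
  \<open>S' / P' = B / (2 D) \<cdot> 1 / w + ((2 bb + B) D - B C) / (2 D) \<cdot> 1 / (C w + D / w)\<close>
  exhibits both summands with positive real part.\<close>
lemma Re_ratio_case2_pos:
  fixes B C D bb :: real
  assumes "B > 0" "C > 0" "D > 0" and K: "(2 * bb + B) * D - B * C > 0" and w: "Re w > 0"
  shows "Re ((of_real bb / 4 + of_real B * (1 + 1 / w^2) / 8) / (of_real C * w / 4 + of_real D / (4 * w))) > 0"
proof -
  define q where "q = of_real C * w + of_real D * (1 / w)"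
  have "Re q > 0"
    unfolding q_def using \<open>C > 0\<close> \<open>D > 0\<close> w Re_inverse_pos[OF w]
    by (simp only: plus_complex.sel Re_of_real_mult) (simp add: add_pos_pos)
  then have "q \<noteq> 0" "w \<noteq> 0" using w by auto
  have P': "of_real C * w / 4 + of_real D / (4 * w) = q / 4"
    using \<open>w \<noteq> 0\<close> by (simp add: q_def field_simps)
  have S': "of_real bb / 4 + of_real B * (1 + 1 / w^2) / 8
      = (of_real (B / (2 * D)) * (q / w) + of_real (((2 * bb + B) * D - B * C) / (2 * D))) / 4"
    using \<open>w \<noteq> 0\<close> \<open>D > 0\<close> by (simp add: q_def field_simps power2_eq_square)
  have "((X * (q / w) + Y) / 4) / (q / 4) = X * (1 / w) + Y * (1 / q)" for X Y
    using \<open>w \<noteq> 0\<close> \<open>q \<noteq> 0\<close> by (simp add: field_simps)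
  then have "(of_real bb / 4 + of_real B * (1 + 1 / w^2) / 8) / (of_real C * w / 4 + of_real D / (4 * w))
      = of_real (B / (2 * D)) * (1 / w) + of_real (((2 * bb + B) * D - B * C) / (2 * D)) * (1 / q)"
    unfolding P' S' .
  moreover have "Re (of_real (B / (2 * D)) * (1 / w)) > 0"
    unfolding Re_of_real_mult using \<open>B > 0\<close> \<open>D > 0\<close> Re_inverse_pos[OF w] by simp
  moreover have "Re (of_real (((2 * bb + B) * D - B * C) / (2 * D)) * (1 / q)) > 0"
    unfolding Re_of_real_mult using K \<open>D > 0\<close> Re_inverse_pos[OF \<open>Re q > 0\<close>] by simp
  ultimately show ?thesis by simp
qed

lemma shear_map_univalent_and_convex_case2:
  fixes a b :: real
  assumes a: "\<bar>a\<bar> < 1" and b: "\<bar>b\<bar> < 1" and c: "1 + 3 * a + 3 * a * b + a^2 * b > 0"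
  shows "inj_on (shear_map (S_case2 a b) (P_case2 a b)) {w. Re w > 0}"
    and "convex (shear_map (S_case2 a b) (P_case2 a b) ` {w. Re w > 0} \<inter> {z. Im z = T})"
proof -
  define B where "B = (1 - a) * (1 - b)"
  define C where "C = (1 - a) * (1 + b)"
  define D where "D = (1 + a) * (1 - b)"
  define bb where "bb = (1 + a) * (1 + b)"
  have "B > 0" "C > 0" "D > 0" using a b by (auto simp: B_def C_def D_def)
  have "(2 * bb + B) * D - B * C = 2 * (1 - b) * (1 + 3 * a + 3 * a * b + a^2 * b)"
    by (simp add: B_def C_def D_def bb_def power2_eq_square algebra_simps)
  then have K: "(2 * bb + B) * D - B * C > 0" using b c by simp
  define S' where "S' w = of_real bb / 4 + of_real B * (1 + 1 / w^2) / 8" for w :: complex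
  define P' where "P' w = of_real C * w / 4 + of_real D / (4 * w)" for w :: complex
  have "\<forall>w\<in>{w. Re w > 0}. (P_case2 a b has_field_derivative P' w) (at w)"
    using has_field_derivative_P_case2 by (simp add: P'_def C_def D_def)
  moreover have "\<forall>w\<in>{w. Re w > 0}. (S_case2 a b has_field_derivative S' w) (at w)"
    using has_field_derivative_S_case2 by (simp add: S'_def B_def bb_def)
  moreover have "\<forall>w\<in>{w. Re w > 0}. Re (P' w) > 0"
  proof
    fix w :: complex assume "w \<in> {w. Re w > 0}"
    then have w: "Re w > 0" by simp
    have "P' w = of_real (C / 4) * w + of_real (D / 4) * (1 / w)"
      by (simp add: P'_def field_simps)
    moreover have "Re (of_real (C / 4) * w) > 0" "Re (of_real (D / 4) * (1 / w)) > 0"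
      unfolding Re_of_real_mult using \<open>C > 0\<close> \<open>D > 0\<close> w Re_inverse_pos[OF w] by simp_all
    ultimately show "Re (P' w) > 0" by simp
  qed
  moreover have "\<forall>x>0. \<forall>T. \<exists>y. Im (P_case2 a b (Complex x y)) = T"
    using Im_P_case2_surjective[OF a b] by blast
  moreover have "\<forall>w\<in>{w. Re w > 0}. Re (S' w / P' w) > 0"
    using Re_ratio_case2_pos[OF \<open>B > 0\<close> \<open>C > 0\<close> \<open>D > 0\<close> K] by (simp add: S'_def P'_def)
  ultimately show "inj_on (shear_map (S_case2 a b) (P_case2 a b)) {w. Re w > 0}"
    and "convex (shear_map (S_case2 a b) (P_case2 a b) ` {w. Re w > 0} \<inter> {z. Im z = T})"
    by (rule shear_map_univalent_and_convex)+
qed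

section \<open>Univalence and convexity of the convolution\<close>

lemma taylor_coeffs_minus_type:
  assumes f: "class_S_half \<alpha> \<gamma> h g" and a: "\<bar>a\<bar> < 1"
    and s: "\<forall>z\<in>unit_disk. h z + cis (- 2 * p) * g z = (1 + of_real a) * z / (1 - cis p * z)"
    and w: "\<forall>z\<in>unit_disk. deriv g z / deriv h z
              = cis (2 * p) * ((of_real a - z * cis p) / (1 - of_real a * z * cis p))"
  shows "taylor_coeff h n = cnj (cis p) * of_real (koebe_mix_coeff a n) * cis p ^ n"
    and "taylor_coeff g n = cis p * of_real (coanalytic_coeff a (koebe_mix_coeff a) n) * cis p ^ n"
proof -
  have "\<forall>z\<in>unit_disk. deriv g z / deriv h z
      = cis (2 * p) * ((of_real a + of_real (-1) * z * cis p) / (1 + of_real (-1 * a) * z * cis p))"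
    using w by simp
  from taylor_coeffs_from_dilatation[OF f a _ s this sums_koebe_mix has_field_derivative_koebe_mix]
  show "taylor_coeff h n = cnj (cis p) * of_real (koebe_mix_coeff a n) * cis p ^ n"
    and "taylor_coeff g n = cis p * of_real (coanalytic_coeff a (koebe_mix_coeff a) n) * cis p ^ n"
    by (simp_all add: koebe_mix_def)
qed

lemma taylor_coeffs_plus_type:
  assumes f: "class_S_half \<alpha> \<gamma> h g" and a: "\<bar>a\<bar> < 1"
    and s: "\<forall>z\<in>unit_disk. h z + cis (- 2 * p) * g z = (1 + of_real a) * z / (1 - cis p * z)"
    and w: "\<forall>z\<in>unit_disk. deriv g z / deriv h z
              = cis (2 * p) * ((of_real a + z * cis p) / (1 + of_real a * z * cis p))"
  shows "taylor_coeff h n = cnj (cis p) * of_real (artanh_mix_coeff a n) * cis p ^ n"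
    and "taylor_coeff g n = cis p * of_real (coanalytic_coeff a (artanh_mix_coeff a) n) * cis p ^ n"
proof -
  have "\<forall>z\<in>unit_disk. deriv g z / deriv h z
      = cis (2 * p) * ((of_real a + of_real 1 * z * cis p) / (1 + of_real (1 * a) * z * cis p))"
    using w by simp
  from taylor_coeffs_from_dilatation[OF f a _ s this sums_artanh_mix has_field_derivative_artanh_mix]
  show "taylor_coeff h n = cnj (cis p) * of_real (artanh_mix_coeff a n) * cis p ^ n"
    and "taylor_coeff g n = cis p * of_real (coanalytic_coeff a (artanh_mix_coeff a) n) * cis p ^ n"
    by (simp_all add: artanh_mix_def Artanh_def)
qed

lemma harm_conv_eq_rotated_shear:
  fixes c1 c2 d1 d2 :: "nat \<Rightarrow> real"
  assumes h1: "\<And>n. taylor_coeff h1 n = cnj (cis p1) * of_real (c1 n) * cis p1 ^ n"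
    and g1: "\<And>n. taylor_coeff g1 n = cis p1 * of_real (d1 n) * cis p1 ^ n"
    and h2: "\<And>n. taylor_coeff h2 n = cnj (cis p2) * of_real (c2 n) * cis p2 ^ n"
    and g2: "\<And>n. taylor_coeff g2 n = cis p2 * of_real (d2 n) * cis p2 ^ n"
    and sh: "\<And>u. norm u < 1 \<Longrightarrow> (\<lambda>n. of_real (c1 n * c2 n) * u^n) sums ((S (cayley u) + P (cayley u)) / 2)"
    and sg: "\<And>u. norm u < 1 \<Longrightarrow> (\<lambda>n. of_real (d1 n * d2 n) * u^n) sums ((S (cayley u) - P (cayley u)) / 2)"
    and z: "z \<in> unit_disk"
  shows "harm_conv h1 g1 h2 g2 z = cnj (cis (p1 + p2)) * shear_map S P (cayley (cis (p1 + p2) * z))"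
proof -
  define e where "e = cis (p1 + p2)"
  define w where "w = cayley (e * z)"
  have ez: "norm (e * z) < 1" using z by (simp add: e_def unit_disk_def norm_mult)
  have "(\<lambda>n. cnj e * (of_real (c1 n * c2 n) * (e * z)^n)) sums (cnj e * ((S w + P w) / 2))"
    unfolding w_def by (intro sums_mult sh ez)
  moreover have "cnj e * (of_real (c1 n * c2 n) * (e * z)^n) = taylor_coeff h1 n * taylor_coeff h2 n * z^n" for n
    by (simp add: h1 h2 e_def cis_mult[symmetric] power_mult_distrib ac_simps)
  ultimately have hh: "hadamard h1 h2 z = cnj e * ((S w + P w) / 2)"
    unfolding hadamard_def by (simp add: sums_iff)
  have "(\<lambda>n. e * (of_real (d1 n * d2 n) * (e * z)^n)) sums (e * ((S w - P w) / 2))"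
    unfolding w_def by (intro sums_mult sg ez)
  moreover have "e * (of_real (d1 n * d2 n) * (e * z)^n) = taylor_coeff g1 n * taylor_coeff g2 n * z^n" for n
    by (simp add: g1 g2 e_def cis_mult[symmetric] power_mult_distrib ac_simps)
  ultimately have gg: "hadamard g1 g2 z = e * ((S w - P w) / 2)"
    unfolding hadamard_def by (simp add: sums_iff)
  have "cnj e * ((S w + P w) / 2) + cnj (e * ((S w - P w) / 2))
      = cnj e * ((S w + P w) / 2 + cnj ((S w - P w) / 2))"
    by (simp only: complex_cnj_mult distrib_left)
  also have "(S w + P w) / 2 + cnj ((S w - P w) / 2) = shear_map S P w"
    by (simp add: shear_map_def complex_eq_iff field_simps)
  finally have "cnj e * ((S w + P w) / 2) + cnj (e * ((S w - P w) / 2)) = cnj e * shear_map S P w" .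
  then show ?thesis
    unfolding harm_conv_def hh gg e_def[symmetric] w_def[symmetric] .
qed

lemma rotated_line_section:
  assumes e: "norm e = 1"
  shows "(\<lambda>\<zeta>. cnj e * \<zeta>) ` A \<inter> {w0 + of_real t * cnj e | t. True}
       = (\<lambda>\<zeta>. cnj e * \<zeta>) ` (A \<inter> {z. Im z = Im (e * w0)})"
proof -
  have "e \<noteq> 0" using e by auto
  have "cnj e = inverse e"
    using e by (metis complex_norm_square inverse_unique of_real_1 power_one)
  then have "cnj e * \<zeta> = w0 + of_real t * cnj e \<longleftrightarrow> \<zeta> = e * w0 + of_real t" for \<zeta> t
    using \<open>e \<noteq> 0\<close> by (auto simp: \<open>cnj e = inverse e\<close> field_simps)
  moreover have "(\<exists>t. \<zeta> = e * w0 + of_real t) \<longleftrightarrow> Im \<zeta> = Im (e * w0)" for \<zeta>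
    by (auto simp: complex_eq_iff intro!: exI[of _ "Re \<zeta> - Re (e * w0)"])
  ultimately show ?thesis by blast
qed

lemma rotated_shear_univalent_convex_in_direction:
  assumes F: "\<forall>z\<in>unit_disk. F z = cnj (cis G) * shear_map S P (cayley (cis G * z))"
    and inj: "inj_on (shear_map S P) {w. Re w > 0}"
    and cvx: "\<And>T. convex (shear_map S P ` {w. Re w > 0} \<inter> {z. Im z = T})"
  shows "inj_on F unit_disk \<and> convex_in_direction F (- G)"
proof -
  define e where "e = cis G"
  have e: "norm e = 1" "e \<noteq> 0" "cis (- G) = cnj e" by (simp_all add: e_def cis_cnj)
  have "cnj e * e = 1" "e * cnj e = 1"
    using e by (metis complex_norm_square mult.commute of_real_1 power_one)+
  then have rot: "bij_betw (\<lambda>z. e * z) unit_disk unit_disk"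
    using e by (intro bij_betwI[where g = "\<lambda>z. cnj e * z"])
      (auto simp: unit_disk_def norm_mult mult.assoc[symmetric])
  then have "bij_betw (\<lambda>z. cayley (e * z)) unit_disk {w. Re w > 0}"
    using bij_betw_cayley bij_betw_trans[of _ unit_disk unit_disk cayley] unfolding unit_disk_def o_def
    by auto
  then have inj_cayley: "inj_on (\<lambda>z. cayley (e * z)) unit_disk"
    and image: "(\<lambda>z. cayley (e * z)) ` unit_disk = {w. Re w > 0}"
    by (auto simp: bij_betw_def)
  have F: "\<forall>z\<in>unit_disk. F z = cnj e * shear_map S P (cayley (e * z))"
    using F by (simp add: e_def)
  then have F_image: "F ` unit_disk = (\<lambda>\<zeta>. cnj e * \<zeta>) ` (shear_map S P ` {w. Re w > 0})"
    unfolding image[symmetric] by (auto simp: image_image)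
  have "inj_on F unit_disk"
  proof (rule inj_onI)
    fix z1 z2 assume z: "z1 \<in> unit_disk" "z2 \<in> unit_disk" "F z1 = F z2"
    then have "shear_map S P (cayley (e * z1)) = shear_map S P (cayley (e * z2))"
      using F e(2) by simp
    then have "cayley (e * z1) = cayley (e * z2)"
      using inj image z(1,2) by (auto dest: inj_onD)
    then show "z1 = z2" using inj_cayley z(1,2) by (auto dest: inj_onD)
  qed
  moreover have "convex (F ` unit_disk \<inter> {w0 + of_real t * cis (- G) | t. True})" for w0
  proof -
    have "convex ((\<lambda>\<zeta>. cnj e * \<zeta>) ` (shear_map S P ` {w. Re w > 0} \<inter> {z. Im z = Im (e * w0)}))"
      using cvx by (rule convex_linear_image[rotated]) (rule linear_times)
    then show ?thesis
      unfolding F_image e(3) rotated_line_section[OF e(1)] .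
  qed
  ultimately show ?thesis unfolding convex_in_direction_def by blast
qed

lemma convolution_univalent_convex_in_direction:
  fixes c1 c2 d1 d2 :: "nat \<Rightarrow> real"
  assumes "\<And>n. taylor_coeff h1 n = cnj (cis p1) * of_real (c1 n) * cis p1 ^ n"
    and "\<And>n. taylor_coeff g1 n = cis p1 * of_real (d1 n) * cis p1 ^ n"
    and "\<And>n. taylor_coeff h2 n = cnj (cis p2) * of_real (c2 n) * cis p2 ^ n"
    and "\<And>n. taylor_coeff g2 n = cis p2 * of_real (d2 n) * cis p2 ^ n"
    and "\<And>u. norm u < 1 \<Longrightarrow> (\<lambda>n. of_real (c1 n * c2 n) * u^n) sums ((S (cayley u) + P (cayley u)) / 2)"
    and "\<And>u. norm u < 1 \<Longrightarrow> (\<lambda>n. of_real (d1 n * d2 n) * u^n) sums ((S (cayley u) - P (cayley u)) / 2)"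
    and "inj_on (shear_map S P) {w. Re w > 0}"
    and "\<And>T. convex (shear_map S P ` {w. Re w > 0} \<inter> {z. Im z = T})"
  shows "inj_on (harm_conv h1 g1 h2 g2) unit_disk \<and> convex_in_direction (harm_conv h1 g1 h2 g2) (- (p1 + p2))"
  using rotated_shear_univalent_convex_in_direction[OF _ assms(7,8)]
    harm_conv_eq_rotated_shear[OF assms(1-6)] by blast

lemma cis_eq_cos_if_abs_cos_eq_1:
  assumes "\<bar>cos x\<bar> = 1"
  shows "cis x = of_real (cos x)"
proof -
  have "(cos x)^2 = 1" using assms by (metis power2_abs power_one)
  then have "(sin x)^2 = 0" using sin_cos_squared_add[of x] by simp
  then show ?thesis by (simp add: complex_eq_iff)
qed

theorem theorem6:
  fixes a1 a2 :: complex and \<gamma>1 \<gamma>2 \<theta> :: real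
    and h1 g1 h2 g2 :: "complex \<Rightarrow> complex"
  assumes a1: "a1 \<in> unit_disk" and a2: "a2 \<in> unit_disk"
    and g1r: "0 \<le> \<gamma>1" "\<gamma>1 < 2 * pi"
    and g2r: "0 \<le> \<gamma>2" "\<gamma>2 < 2 * pi"
    and f1: "class_S_half a1 \<gamma>1 h1 g1"
    and f2: "class_S_half a2 \<gamma>2 h2 g2"
    and s1: "\<forall>z\<in>unit_disk. h1 z + cis (- 2 * (\<gamma>1 + gam a1)) * g1 z
              = (1 + of_real (aprime a1)) * z / (1 - cis (\<gamma>1 + gam a1) * z)"
    and s2: "\<forall>z\<in>unit_disk. h2 z + cis (- 2 * (\<gamma>2 + gam a2)) * g2 z
              = (1 + of_real (aprime a2)) * z / (1 - cis (\<gamma>2 + gam a2) * z)"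
    and w1: "\<forall>z\<in>unit_disk. deriv g1 z / deriv h1 z
              = cis (2 * (\<gamma>1 + gam a1)) *
                ((of_real (aprime a1) - z * cis (\<gamma>1 + gam a1)) /
                 (1 - of_real (aprime a1) * z * cis (\<gamma>1 + gam a1)))"
    and w2: "\<forall>z\<in>unit_disk. deriv g2 z / deriv h2 z
              = cis (2 * (\<gamma>2 + gam a2)) *
                ((of_real (aprime a2) + z * cis \<theta>) /
                 (1 + of_real (aprime a2) * z * cis \<theta>))"
    and cases:
      "(cos (\<theta> - \<gamma>2 - gam a2) = -1 \<and>
          1 + 3 * aprime a1 + 3 * aprime a2 + aprime a1 * aprime a2 \<ge> 0) \<or>
       (cos (\<theta> - \<gamma>2 - gam a2) = 1 \<and>
          1 + 3 * aprime a1 + 3 * aprime a1 * aprime a2 + (aprime a1)\<^sup>2 * aprime a2 > 0)"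
  shows "inj_on (harm_conv h1 g1 h2 g2) unit_disk \<and>
         convex_in_direction (harm_conv h1 g1 h2 g2)
           (- (\<gamma>1 + \<gamma>2 + gam a1 + gam a2))"
proof -
  define p1 where "p1 = \<gamma>1 + gam a1"
  define p2 where "p2 = \<gamma>2 + gam a2"
  have a: "\<bar>aprime a1\<bar> < 1" "\<bar>aprime a2\<bar> < 1"
    using abs_aprime_less_1 a1 a2 by auto
  note f1_coeffs = taylor_coeffs_minus_type[OF f1 a(1) s1[folded p1_def] w1[folded p1_def]]
  have dir: "\<gamma>1 + \<gamma>2 + gam a1 + gam a2 = p1 + p2" by (simp add: p1_def p2_def)
  have \<theta>: "cis \<theta> = of_real (cos (\<theta> - \<gamma>2 - gam a2)) * cis p2" if "\<bar>cos (\<theta> - \<gamma>2 - gam a2)\<bar> = 1"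
  proof -
    have "cis \<theta> = cis (\<theta> - \<gamma>2 - gam a2) * cis p2" unfolding p2_def cis_mult by simp
    with cis_eq_cos_if_abs_cos_eq_1[OF that] show ?thesis by simp
  qed
  from cases show ?thesis
  proof (elim disjE conjE)
    assume "cos (\<theta> - \<gamma>2 - gam a2) = -1" and c: "1 + 3 * aprime a1 + 3 * aprime a2 + aprime a1 * aprime a2 \<ge> 0"
    then have "cis \<theta> = - cis p2" using \<theta> by simp
    with w2 have w2': "\<forall>z\<in>unit_disk. deriv g2 z / deriv h2 z
        = cis (2 * p2) * ((of_real (aprime a2) - z * cis p2) / (1 - of_real (aprime a2) * z * cis p2))"
      by (simp add: p2_def)
    show ?thesis unfolding dir
      by (rule convolution_univalent_convex_in_direction[OF f1_coeffs
            taylor_coeffs_minus_type[OF f2 a(2) s2[folded p2_def] w2'] sums_convolution_case1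
            shear_map_univalent_and_convex_case1[OF a c]])
  next
    assume "cos (\<theta> - \<gamma>2 - gam a2) = 1" and c: "1 + 3 * aprime a1 + 3 * aprime a1 * aprime a2 + (aprime a1)\<^sup>2 * aprime a2 > 0"
    then have "cis \<theta> = cis p2" using \<theta> by simp
    with w2 have w2': "\<forall>z\<in>unit_disk. deriv g2 z / deriv h2 z
        = cis (2 * p2) * ((of_real (aprime a2) + z * cis p2) / (1 + of_real (aprime a2) * z * cis p2))"
      by (simp add: p2_def)
    show ?thesis unfolding dir
      by (rule convolution_univalent_convex_in_direction[OF f1_coeffs
            taylor_coeffs_plus_type[OF f2 a(2) s2[folded p2_def] w2'] sums_convolution_case2
            shear_map_univalent_and_convex_case2[OF a c]])
  qed
qed

end
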